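(* Let $(P,\lambda)$ be a marked poset which is strict and irredundant, with $\lambda(P^* )\subseteq\mathbb{Z}$. Let $\mathcal{L}(P)$ be the set of linear extensions $\pi=(y_1,\dots,y_N)$ of $P$ in which the marked elements appear in increasing order of their markings. Then for every integer $n\ge 0$ the number of lattice points of the dilate $n\,\mathcal{O}(P,\lambda)$ is $$\mathrm{Ehr}_{\mathcal{O}(P,\lambda)}(n)=\sum_{\pi\in\mathcal{L}(P)}\ \prod_{(a,b)}\binom{n(\lambda(b)-\lambda(a))-d+k}{k},$$ where the product runs over all pairs $(a,b)$ of marked elements that are consecutive among the marked elements in $\pi$ (so that the entries of $\pi$ strictly between $a$ and $b$ form a block of unmarked elements), $k$ is the number of elements strictly between $a$ and $b$ in $\pi$, and $d$ is the number of descents of $\pi$ occurring between $a$ and $b$.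
   Context: A marked poset $(P,\lambda)$ is a finite poset $(P,\preceq)$ together with an induced subposet $P^*\subseteq P$ of marked elements and an order-preserving marking $\lambda:P^*\to\mathbb{R}$, with $\min(P)\cup\max(P)\subseteq P^*$. It is strict if $\lambda(a)<\lambda(b)$ whenever $a\prec b$ in $P^*$, and irredundant (regular) if for every covering relation $p\prec q$ in $P$ and all $a,b\in P^*$ with $a\preceq q$ and $p\preceq b$, one has $a=b$ or $\lambda(a)<\lambda(b)$. The marked order polytope $\mathcal{O}(P,\lambda)\subseteq\mathbb{R}^{P\setminus P^*}$ is the set of all $x$ such that, setting $x_a=\lambda(a)$ for $a\in P^*$, $x_p\le x_q$ for all $p\preceq q$; its lattice points in the dilate $n\mathcal{O}(P,\lambda)$ are counted in $\mathbb{Z}^{P\setminus P^*}$. A linear extension of $P$ (with $|P|=N$) is an order-preserving bijection $P\to[N]$, identified with the sequence $(y_1,\dots,y_N)$ of elements in order. Descents are taken with respect to a fixed natural labeling $\omega:P\to[N]$ (an order-preserving bijection): $\pi=(y_1,\dots,y_N)$ has a descent at position $j$ if $\omega(y_j)>\omega(y_{j+1})$; a descent between $a$ and $b$ is one at a position $j$ with $y_j,y_{j+1}$ among the entries from $a$ to $b$ inclusive. *)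

theory Defs
  imports Complex_Main
begin

definition finite_poset :: "'a set \<Rightarrow> ('a \<Rightarrow> 'a \<Rightarrow> bool) \<Rightarrow> bool" where
  "finite_poset P le \<longleftrightarrow> finite P \<and>
     (\<forall>p q. le p q \<longrightarrow> p \<in> P \<and> q \<in> P) \<and>
     (\<forall>p\<in>P. le p p) \<and>
     (\<forall>p q. le p q \<and> le q p \<longrightarrow> p = q) \<and>
     (\<forall>p q s. le p q \<and> le q s \<longrightarrow> le p s)"

definition poset_min :: "'a set \<Rightarrow> ('a \<Rightarrow> 'a \<Rightarrow> bool) \<Rightarrow> 'a set" where
  "poset_min P le = {p \<in> P. \<forall>q\<in>P. le q p \<longrightarrow> q = p}"

definition poset_max :: "'a set \<Rightarrow> ('a \<Rightarrow> 'a \<Rightarrow> bool) \<Rightarrow> 'a set" where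
  "poset_max P le = {p \<in> P. \<forall>q\<in>P. le p q \<longrightarrow> q = p}"

definition marked_poset :: "'a set \<Rightarrow> ('a \<Rightarrow> 'a \<Rightarrow> bool) \<Rightarrow> 'a set \<Rightarrow> ('a \<Rightarrow> real) \<Rightarrow> bool" where
  "marked_poset P le M lam \<longleftrightarrow> finite_poset P le \<and> M \<subseteq> P \<and>
     (\<forall>a\<in>M. \<forall>b\<in>M. le a b \<longrightarrow> lam a \<le> lam b) \<and>
     poset_min P le \<union> poset_max P le \<subseteq> M"

definition strict_marking :: "('a \<Rightarrow> 'a \<Rightarrow> bool) \<Rightarrow> 'a set \<Rightarrow> ('a \<Rightarrow> real) \<Rightarrow> bool" where
  "strict_marking le M lam \<longleftrightarrow> (\<forall>a\<in>M. \<forall>b\<in>M. le a b \<and> a \<noteq> b \<longrightarrow> lam a < lam b)"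

definition covers :: "('a \<Rightarrow> 'a \<Rightarrow> bool) \<Rightarrow> 'a \<Rightarrow> 'a \<Rightarrow> bool" where
  "covers le p q \<longleftrightarrow> le p q \<and> p \<noteq> q \<and> \<not> (\<exists>s. le p s \<and> le s q \<and> s \<noteq> p \<and> s \<noteq> q)"

definition irredundant :: "('a \<Rightarrow> 'a \<Rightarrow> bool) \<Rightarrow> 'a set \<Rightarrow> ('a \<Rightarrow> real) \<Rightarrow> bool" where
  "irredundant le M lam \<longleftrightarrow>
     (\<forall>p q. covers le p q \<longrightarrow>
        (\<forall>a\<in>M. \<forall>b\<in>M. le a q \<and> le p b \<longrightarrow> a = b \<or> lam a < lam b))"

text \<open>The marked order polytope, as a subset of R^(P - M); points are functions 'a => real
  vanishing outside P - M.\<close>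
definition marked_order_polytope ::
  "'a set \<Rightarrow> ('a \<Rightarrow> 'a \<Rightarrow> bool) \<Rightarrow> 'a set \<Rightarrow> ('a \<Rightarrow> real) \<Rightarrow> ('a \<Rightarrow> real) set" where
  "marked_order_polytope P le M lam =
     {x. (\<forall>p. p \<notin> P - M \<longrightarrow> x p = 0) \<and>
         (\<forall>p q. le p q \<longrightarrow>
            (if p \<in> M then lam p else x p) \<le> (if q \<in> M then lam q else x q))}"

definition ehrhart_count :: "('a \<Rightarrow> real) set \<Rightarrow> nat \<Rightarrow> nat" where
  "ehrhart_count Q n = card {z \<in> (\<lambda>x p. real n * x p) ` Q. \<forall>p. z p \<in> \<int>}"

definition linear_extension :: "'a set \<Rightarrow> ('a \<Rightarrow> 'a \<Rightarrow> bool) \<Rightarrow> 'a list \<Rightarrow> bool" where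
  "linear_extension P le ys \<longleftrightarrow> distinct ys \<and> set ys = P \<and>
     (\<forall>i<length ys. \<forall>j<length ys. le (ys ! i) (ys ! j) \<longrightarrow> i \<le> j)"

definition natural_labeling :: "'a set \<Rightarrow> ('a \<Rightarrow> 'a \<Rightarrow> bool) \<Rightarrow> ('a \<Rightarrow> nat) \<Rightarrow> bool" where
  "natural_labeling P le \<omega> \<longleftrightarrow> bij_betw \<omega> P {1..card P} \<and> (\<forall>p q. le p q \<longrightarrow> \<omega> p \<le> \<omega> q)"

text \<open>L(P): linear extensions in which the marked elements appear in increasing order of
  their markings (ties among equally marked elements broken by the natural labeling).\<close>
definition marked_linexts ::
  "'a set \<Rightarrow> ('a \<Rightarrow> 'a \<Rightarrow> bool) \<Rightarrow> 'a set \<Rightarrow> ('a \<Rightarrow> real) \<Rightarrow> ('a \<Rightarrow> nat) \<Rightarrow> 'a list set" where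
  "marked_linexts P le M lam \<omega> =
     {ys. linear_extension P le ys \<and>
        (\<forall>i j. i < j \<and> j < length ys \<and> ys ! i \<in> M \<and> ys ! j \<in> M \<longrightarrow>
           lam (ys ! i) < lam (ys ! j) \<or>
           (lam (ys ! i) = lam (ys ! j) \<and> \<omega> (ys ! i) < \<omega> (ys ! j)))}"

definition consecutive_marked :: "'a set \<Rightarrow> 'a list \<Rightarrow> (nat \<times> nat) set" where
  "consecutive_marked M ys =
     {(i, j). i < j \<and> j < length ys \<and> ys ! i \<in> M \<and> ys ! j \<in> M \<and>
              (\<forall>t. i < t \<and> t < j \<longrightarrow> ys ! t \<notin> M)}"

definition descents_between :: "('a \<Rightarrow> nat) \<Rightarrow> 'a list \<Rightarrow> nat \<Rightarrow> nat \<Rightarrow> nat" where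
  "descents_between \<omega> ys i j = card {t. i \<le> t \<and> t < j \<and> \<omega> (ys ! t) > \<omega> (ys ! Suc t)}"

end

theory Submission
  imports Defs "HOL-Analysis.Weierstrass_Theorems" "HOL-Library.Product_Lexorder"
begin

text \<open>
  An integer point \<open>v\<close> of the dilated polytope, read as a labelling of all of \<open>P\<close> that agrees
  with the scaled marking on marked elements, determines a unique linear extension: list the
  elements by increasing \<open>(v p, \<omega> p)\<close>. Conversely, the points with a given linear extension
  \<open>\<pi>\<close> are exactly the labellings that increase weakly along \<open>\<pi>\<close>, strictly at its descents,
  and take the prescribed values at the marked elements. Between two consecutive marked
  elements \<open>a\<close>, \<open>b\<close> with \<open>k\<close> elements and \<open>d\<close> descents in between, such a segment is a weakly
  increasing integer sequence from \<open>n \<lambda>(a)\<close> to \<open>n \<lambda>(b)\<close> with \<open>d\<close> forced strict steps, and there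
  are \<open>(n(\<lambda>(b) - \<lambda>(a)) - d + k) choose k\<close> of them. This proves the formula for \<open>n \<ge> 1\<close>.

  For \<open>n = 0\<close> we use that the right-hand side is a polynomial in \<open>n\<close>. If the polytope is
  empty, it vanishes for all \<open>n \<ge> 1\<close>, hence at \<open>0\<close>. If the polytope contains a point \<open>x\<^sub>0\<close>,
  refining \<open>\<omega>\<close> to the key \<open>p \<mapsto> (x\<^sub>0 p, \<omega> p)\<close> does not change which linear extensions
  occur but makes the decomposition valid for every \<open>n \<ge> 0\<close>, also at \<open>n = 0\<close> where it counts
  the single point \<open>0\<close>. The two polynomials agree for \<open>n \<ge> 1\<close>, hence at \<open>0\<close>.
\<close>

section \<open>Integer chains with forced strict steps\<close>

lemma sum_binomial_int_interval:
  fixes a c :: int and d :: nat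
  shows "(\<Sum>x\<in>{a..c}. if int d \<le> c - x then (nat (c - x - int d) + k) choose k else 0)
       = (if int d \<le> c - a then (nat (c - a - int d) + Suc k) choose Suc k else 0)"
proof -
  define b where "b = c - int d"
  have "(\<Sum>x\<in>{a..c}. if int d \<le> c - x then (nat (c - x - int d) + k) choose k else 0)
      = (\<Sum>x\<in>{a..c}. if x \<le> b then (nat (b - x) + k) choose k else 0)"
    by (intro sum.cong refl) (simp add: b_def algebra_simps)
  also have "\<dots> = (\<Sum>x\<in>{x\<in>{a..c}. x \<le> b}. (nat (b - x) + k) choose k)"
    by (rule sum.inter_filter[symmetric]) simp
  also have "{x\<in>{a..c}. x \<le> b} = {a..b}"
    by (auto simp: b_def)
  also have "(\<Sum>x\<in>{a..b}. (nat (b - x) + k) choose k) =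
      (if a \<le> b then (nat (b - a) + Suc k) choose Suc k else 0)"
  proof (cases "a \<le> b")
    case True
    have "(\<Sum>x\<in>{a..b}. (nat (b - x) + k) choose k) = (\<Sum>s\<le>nat (b - a). (k + s) choose s)"
    proof (rule sum.reindex_bij_witness[of _ "\<lambda>s. b - int s" "\<lambda>x. nat (b - x)"])
      fix x
      show "(k + nat (b - x)) choose nat (b - x) = (nat (b - x) + k) choose k"
        using binomial_symmetric[of k "nat (b - x) + k"] by (simp add: add.commute)
    qed (use True in auto)
    also have "\<dots> = Suc (k + nat (b - a)) choose nat (b - a)"
      by (rule sum_choose_lower)
    also have "\<dots> = (nat (b - a) + Suc k) choose Suc k"
      using binomial_symmetric[of "nat (b - a)" "Suc (k + nat (b - a))"]
      by (simp add: add.commute del: binomial_Suc_Suc)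
    finally show ?thesis
      using True by simp
  qed simp
  finally show ?thesis
    by (simp add: b_def algebra_simps)
qed

text \<open>Chains are padded with \<open>0\<close> outside \<open>[i, j]\<close>, so that they form a finite set.\<close>

definition int_chains :: "nat \<Rightarrow> nat \<Rightarrow> int \<Rightarrow> int \<Rightarrow> (nat \<Rightarrow> bool) \<Rightarrow> (nat \<Rightarrow> int) set" where
  "int_chains i j lo hi D = {u. u i = lo \<and> u j = hi \<and> (\<forall>t. t \<notin> {i..j} \<longrightarrow> u t = 0) \<and>
     (\<forall>t\<in>{i..<j}. u t \<le> u (Suc t) \<and> (D t \<longrightarrow> u t < u (Suc t)))}"

lemma int_chains_le_hi:
  assumes "u \<in> int_chains i j lo hi D" "i \<le> t" "t \<le> j"
  shows "u t \<le> hi"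
proof -
  have "u t \<le> u j"
    using \<open>t \<le> j\<close>
  proof (induction j rule: dec_induct)
    case (step n)
    then show ?case
      using assms(1,2) by (force simp: int_chains_def)
  qed simp
  then show ?thesis
    using assms(1) by (simp add: int_chains_def)
qed

lemma int_chains_Suc:
  assumes "Suc i < j"
  shows "int_chains i j lo hi D =
    (\<Union>x\<in>{lo + (if D i then 1 else 0)..hi}. (\<lambda>u. u(i := lo)) ` int_chains (Suc i) j x hi D)"
proof (intro equalityI subsetI)
  fix u assume u: "u \<in> int_chains i j lo hi D"
  have "u(i := 0) \<in> int_chains (Suc i) j (u (Suc i)) hi D"
    using u assms by (auto simp: int_chains_def)
  moreover have "u (Suc i) \<in> {lo + (if D i then 1 else 0)..hi}"
    using u assms int_chains_le_hi[OF u, of "Suc i"] by (force simp: int_chains_def)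
  moreover have "u = (u(i := 0))(i := lo)"
    using u by (auto simp: int_chains_def)
  ultimately show "u \<in> (\<Union>x\<in>{lo + (if D i then 1 else 0)..hi}. (\<lambda>u. u(i := lo)) ` int_chains (Suc i) j x hi D)"
    by blast
next
  fix u assume "u \<in> (\<Union>x\<in>{lo + (if D i then 1 else 0)..hi}. (\<lambda>u. u(i := lo)) ` int_chains (Suc i) j x hi D)"
  then obtain x u' where x: "lo + (if D i then 1 else 0) \<le> x" and u': "u' \<in> int_chains (Suc i) j x hi D"
    and u: "u = u'(i := lo)"
    by auto
  show "u \<in> int_chains i j lo hi D"
    using x u' assms unfolding u int_chains_def by (auto split: if_splits)
qed

lemma card_int_chains_Suc:
  assumes "Suc i < j" and finite: "\<And>x. finite (int_chains (Suc i) j x hi D)"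
  shows "finite (int_chains i j lo hi D)"
    and "card (int_chains i j lo hi D) =
      (\<Sum>x\<in>{lo + (if D i then 1 else 0)..hi}. card (int_chains (Suc i) j x hi D))"
proof -
  have inj: "inj_on (\<lambda>u. u(i := lo)) (int_chains (Suc i) j x hi D)" for x
  proof (rule inj_onI)
    fix u v assume "u \<in> int_chains (Suc i) j x hi D" "v \<in> int_chains (Suc i) j x hi D"
      and "u(i := lo) = v(i := lo)"
    then show "u = v"
      by (simp add: int_chains_def fun_eq_iff) (metis Suc_n_not_le_n)
  qed
  have disjoint: "(\<lambda>u. u(i := lo)) ` int_chains (Suc i) j x hi D \<inter>
      (\<lambda>u. u(i := lo)) ` int_chains (Suc i) j y hi D = {}" if "x \<noteq> y" for x y
    using that by (auto simp: int_chains_def) (metis fun_upd_other n_not_Suc_n)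
  show "finite (int_chains i j lo hi D)"
    unfolding int_chains_Suc[OF assms(1)] using finite by blast
  have "card (int_chains i j lo hi D) =
      (\<Sum>x\<in>{lo + (if D i then 1 else 0)..hi}. card ((\<lambda>u. u(i := lo)) ` int_chains (Suc i) j x hi D))"
    unfolding int_chains_Suc[OF assms(1)] using finite disjoint by (intro card_UN_disjoint) auto
  also have "\<dots> = (\<Sum>x\<in>{lo + (if D i then 1 else 0)..hi}. card (int_chains (Suc i) j x hi D))"
    by (intro sum.cong refl card_image inj)
  finally show "card (int_chains i j lo hi D) =
      (\<Sum>x\<in>{lo + (if D i then 1 else 0)..hi}. card (int_chains (Suc i) j x hi D))" .
qed

lemma card_int_chains:
  "finite (int_chains i (i + Suc k) lo hi D) \<and>
   card (int_chains i (i + Suc k) lo hi D) =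
     (let d = card {t. i \<le> t \<and> t < i + Suc k \<and> D t}
      in if int d \<le> hi - lo then (nat (hi - lo - int d) + k) choose k else 0)"
proof (induction k arbitrary: i lo)
  case 0
  have "int_chains i (Suc i) lo hi D =
      (if lo \<le> hi \<and> (D i \<longrightarrow> lo < hi) then {(\<lambda>_. 0)(i := lo, Suc i := hi)} else {})"
    by (auto simp: int_chains_def fun_eq_iff)
  moreover have "{t. i \<le> t \<and> t < Suc i \<and> D t} = (if D i then {i} else {})"
    using le_antisym less_Suc_eq_le by auto
  ultimately show ?case
    by auto
next
  case (Suc k)
  let ?j = "i + Suc (Suc k)"
  define \<delta> :: int where "\<delta> = (if D i then 1 else 0)"
  define d where "d = card {t. Suc i \<le> t \<and> t < ?j \<and> D t}"
  have IH: "finite (int_chains (Suc i) ?j x hi D)"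
    "card (int_chains (Suc i) ?j x hi D) =
       (if int d \<le> hi - x then (nat (hi - x - int d) + k) choose k else 0)" for x
    using Suc.IH[of "Suc i" x] by (simp_all add: d_def Let_def)
  have "card (int_chains i ?j lo hi D) = (\<Sum>x\<in>{lo + \<delta>..hi}. card (int_chains (Suc i) ?j x hi D))"
    unfolding \<delta>_def by (rule card_int_chains_Suc(2)[OF _ IH(1)]) simp
  also have "\<dots> = (if int d \<le> hi - (lo + \<delta>) then (nat (hi - (lo + \<delta>) - int d) + Suc k) choose Suc k else 0)"
    unfolding IH(2) by (rule sum_binomial_int_interval)
  moreover have "{t. i \<le> t \<and> t < ?j \<and> D t} = (if D i then insert i else id) {t. Suc i \<le> t \<and> t < ?j \<and> D t}"
    by (auto simp: Suc_le_eq order.order_iff_strict)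
  then have "int (card {t. i \<le> t \<and> t < ?j \<and> D t}) = int d + \<delta>"
    by (simp add: d_def \<delta>_def)
  moreover have "finite (int_chains i ?j lo hi D)"
    by (rule card_int_chains_Suc(1)[OF _ IH(1)]) simp
  ultimately show ?case
    by (simp add: algebra_simps Let_def)
qed

lemma finite_int_chains: "i < j \<Longrightarrow> finite (int_chains i j lo hi D)"
  using card_int_chains[of i "j - Suc i"] by simp

text \<open>
  The hypothesis on \<open>d\<close> keeps the binomial coefficient away from negative integers,
  where \<open>gchoose\<close> does not vanish.
\<close>

lemma real_card_int_chains:
  fixes i j :: nat and D :: "nat \<Rightarrow> bool"
  defines "d \<equiv> card {t. i \<le> t \<and> t < j \<and> D t}"
  assumes "i < j" and "int d \<le> hi - lo + int (j - i - 1)"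
  shows "real (card (int_chains i j lo hi D)) =
    (real_of_int (hi - lo) - real d + real (j - i - 1)) gchoose (j - i - 1)"
proof -
  define k where "k = j - i - 1"
  have card: "card (int_chains i j lo hi D) =
      (if int d \<le> hi - lo then (nat (hi - lo - int d) + k) choose k else 0)"
    using card_int_chains[of i k lo hi D] \<open>i < j\<close> by (simp add: k_def d_def Let_def)
  show ?thesis
  proof (cases "int d \<le> hi - lo")
    case True
    then show ?thesis
      unfolding card k_def[symmetric] by (simp add: binomial_gbinomial)
  next
    case False
    define r where "r = nat (hi - lo - int d + int k)"
    have "r < k"
      using False assms(3) unfolding r_def k_def by arith
    then have "real r gchoose k = 0"
      by (metis binomial_eq_0 binomial_gbinomial of_nat_0)
    moreover have "real r = real_of_int (hi - lo) - real d + real k"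
      using assms(3) by (simp add: r_def k_def)
    ultimately show ?thesis
      unfolding card k_def[symmetric] using False by simp
  qed
qed

lemma descending_steps_less:
  fixes f :: "nat \<Rightarrow> 'a::order"
  assumes "\<And>t. i \<le> t \<Longrightarrow> t < j \<Longrightarrow> f (Suc t) < f t" and "i < j"
  shows "f j < f i"
proof -
  have "f n < f i" if "Suc i \<le> n" "n \<le> j" for n
    using that
  proof (induction n rule: dec_induct)
    case (step n)
    then have "f (Suc n) < f n" "f n < f i"
      using assms(1)[of n] by simp_all
    then show ?case
      by (rule order.strict_trans)
  qed (use assms in simp)
  then show ?thesis
    using \<open>i < j\<close> by simp
qed

section \<open>Blocks between consecutive marked entries of a list\<close>

lemma consecutive_marked_covers:
  assumes "hd ys \<in> M" "last ys \<in> M" "Suc t < length ys"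
  obtains i j where "(i, j) \<in> consecutive_marked M ys" "i \<le> t" "t < j"
proof -
  define A where "A = {s. s \<le> t \<and> ys ! s \<in> M}"
  define B where "B = {s. t < s \<and> s < length ys \<and> ys ! s \<in> M}"
  have "ys \<noteq> []"
    using assms(3) by auto
  then have "0 \<in> A" "length ys - 1 \<in> B"
    using assms by (auto simp: A_def B_def hd_conv_nth last_conv_nth)
  moreover have "finite A" "finite B"
    by (auto simp: A_def B_def)
  ultimately obtain i j where i: "i \<in> A" "\<And>s. s \<in> A \<Longrightarrow> s \<le> i"
    and j: "j \<in> B" "\<And>s. s \<in> B \<Longrightarrow> j \<le> s"
    by (metis Max_ge Max_in Min_le Min_in empty_iff)
  have "ys ! s \<notin> M" if "i < s" "s < j" for s
  proof
    assume "ys ! s \<in> M"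
    then have "s \<in> A \<or> s \<in> B"
      using that j(1) by (auto simp: A_def B_def)
    then show False
      using that i(2) j(2) by force
  qed
  then have "(i, j) \<in> consecutive_marked M ys"
    using i(1) j(1) by (simp add: consecutive_marked_def A_def B_def)
  then show thesis
    using that i(1) j(1) by (simp add: A_def B_def)
qed

lemma consecutive_marked_unique:
  assumes "(i, j) \<in> consecutive_marked M ys" "(i', j') \<in> consecutive_marked M ys"
    and "i \<le> t" "t < j" "i' \<le> t" "t < j'"
  shows "i = i' \<and> j = j'"
proof -
  have inside: "ys ! s \<notin> M" if "(a, b) \<in> consecutive_marked M ys" "a < s" "s < b" for a b s
    using that by (simp add: consecutive_marked_def)
  have ends: "ys ! i \<in> M" "ys ! j \<in> M" "ys ! i' \<in> M" "ys ! j' \<in> M"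
    using assms(1,2) by (simp_all add: consecutive_marked_def)
  have "i = i'"
    using inside[OF assms(1), of i'] inside[OF assms(2), of i] ends assms(3-6)
    by (cases i i' rule: linorder_cases) auto
  moreover have "j = j'"
    using inside[OF assms(1), of j'] inside[OF assms(2), of j] ends assms(3-6)
    by (cases j j' rule: linorder_cases) auto
  ultimately show ?thesis ..
qed

lemma finite_consecutive_marked: "finite (consecutive_marked M ys)"
  by (rule finite_subset[of _ "{..<length ys} \<times> {..<length ys}"]) (auto simp: consecutive_marked_def)

definition block_at :: "'a set \<Rightarrow> 'a list \<Rightarrow> nat \<Rightarrow> nat \<times> nat" where
  "block_at M ys t = (THE b. b \<in> consecutive_marked M ys \<and> fst b \<le> t \<and> t < snd b)"

lemma block_at_eq:
  assumes "(i, j) \<in> consecutive_marked M ys" "i \<le> t" "t < j"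
  shows "block_at M ys t = (i, j)"
  unfolding block_at_def
proof (rule the_equality)
  fix b assume "b \<in> consecutive_marked M ys \<and> fst b \<le> t \<and> t < snd b"
  then show "b = (i, j)"
    using consecutive_marked_unique[OF assms(1), of "fst b" "snd b" t] assms by (simp add: prod_eq_iff)
qed (use assms in simp)

definition label_descents :: "('a \<Rightarrow> 'k::linorder) \<Rightarrow> 'a list \<Rightarrow> nat \<Rightarrow> nat \<Rightarrow> nat" where
  "label_descents \<kappa> ys i j = card {t. i \<le> t \<and> t < j \<and> \<kappa> (ys ! t) > \<kappa> (ys ! Suc t)}"

definition compatible_seqs ::
  "'a set \<Rightarrow> ('a \<Rightarrow> int) \<Rightarrow> ('a \<Rightarrow> 'k::linorder) \<Rightarrow> 'a list \<Rightarrow> (nat \<Rightarrow> int) set" where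
  "compatible_seqs M \<mu> \<kappa> ys = {w. (\<forall>t. length ys \<le> t \<longrightarrow> w t = 0) \<and>
     (\<forall>t<length ys. ys ! t \<in> M \<longrightarrow> w t = \<mu> (ys ! t)) \<and>
     (\<forall>t. Suc t < length ys \<longrightarrow> w t \<le> w (Suc t) \<and> (\<kappa> (ys ! Suc t) < \<kappa> (ys ! t) \<longrightarrow> w t < w (Suc t)))}"

definition block_chains ::
  "('a \<Rightarrow> int) \<Rightarrow> ('a \<Rightarrow> 'k::linorder) \<Rightarrow> 'a list \<Rightarrow> nat \<times> nat \<Rightarrow> (nat \<Rightarrow> int) set" where
  "block_chains \<mu> \<kappa> ys =
     (\<lambda>(i, j). int_chains i j (\<mu> (ys ! i)) (\<mu> (ys ! j)) (\<lambda>t. \<kappa> (ys ! Suc t) < \<kappa> (ys ! t)))"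

definition restrict_blocks :: "'a set \<Rightarrow> 'a list \<Rightarrow> (nat \<Rightarrow> int) \<Rightarrow> nat \<times> nat \<Rightarrow> nat \<Rightarrow> int" where
  "restrict_blocks M ys w =
     restrict (\<lambda>(i, j) t. if t \<in> {i..j} then w t else 0) (consecutive_marked M ys)"

text \<open>Every position but the last lies in exactly one half-open block \<open>[i, j)\<close>; the last
  one is marked.\<close>

definition glue_blocks ::
  "'a set \<Rightarrow> ('a \<Rightarrow> int) \<Rightarrow> 'a list \<Rightarrow> (nat \<times> nat \<Rightarrow> nat \<Rightarrow> int) \<Rightarrow> nat \<Rightarrow> int" where
  "glue_blocks M \<mu> ys F t =
     (if Suc t < length ys then F (block_at M ys t) t
      else if Suc t = length ys then \<mu> (ys ! t) else 0)"

lemma real_card_block_chains: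
  fixes \<mu> :: "'a \<Rightarrow> int" and \<kappa> :: "'a \<Rightarrow> 'k::linorder"
  assumes "i < j" and lex: "(\<mu> (ys ! i), \<kappa> (ys ! i)) < (\<mu> (ys ! j), \<kappa> (ys ! j))"
  shows "real (card (block_chains \<mu> \<kappa> ys (i, j))) =
    (real_of_int (\<mu> (ys ! j) - \<mu> (ys ! i)) - real (label_descents \<kappa> ys i j) + real (j - i - 1))
      gchoose (j - i - 1)"
proof -
  let ?D = "{t. i \<le> t \<and> t < j \<and> \<kappa> (ys ! t) > \<kappa> (ys ! Suc t)}"
  have "?D \<subseteq> {i..<j}"
    by auto
  then have "card ?D \<le> j - i"
    using card_mono[OF finite_atLeastLessThan] by fastforce
  moreover have "\<mu> (ys ! i) < \<mu> (ys ! j)" if "card ?D = j - i"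
  proof -
    have all: "?D = {i..<j}"
      using card_subset_eq[OF finite_atLeastLessThan \<open>?D \<subseteq> {i..<j}\<close>] that by simp
    have "\<kappa> (ys ! Suc t) < \<kappa> (ys ! t)" if "i \<le> t" "t < j" for t
    proof -
      have "t \<in> ?D"
        using that unfolding all by simp
      then show ?thesis
        by simp
    qed
    then have "\<kappa> (ys ! j) < \<kappa> (ys ! i)"
      using descending_steps_less[of i j "\<lambda>t. \<kappa> (ys ! t)"] \<open>i < j\<close> by blast
    then show ?thesis
      using lex by (auto simp: less_prod_def)
  qed
  moreover have "\<mu> (ys ! i) \<le> \<mu> (ys ! j)"
    using lex by (auto simp: less_prod_def)
  ultimately have "int (card ?D) \<le> \<mu> (ys ! j) - \<mu> (ys ! i) + int (j - i - 1)"
    by linarith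
  then show ?thesis
    using real_card_int_chains[OF \<open>i < j\<close>] by (simp add: block_chains_def label_descents_def)
qed

lemma restrict_blocks_in_block_chains:
  assumes "w \<in> compatible_seqs M \<mu> \<kappa> ys"
  shows "restrict_blocks M ys w \<in> (\<Pi>\<^sub>E b\<in>consecutive_marked M ys. block_chains \<mu> \<kappa> ys b)"
proof -
  have "(\<lambda>t. if t \<in> {i..j} then w t else 0) \<in> block_chains \<mu> \<kappa> ys (i, j)"
    if "(i, j) \<in> consecutive_marked M ys" for i j
    using assms that
    by (auto simp: compatible_seqs_def block_chains_def int_chains_def consecutive_marked_def)
  then show ?thesis
    by (auto simp: restrict_blocks_def)
qed

locale marked_endpoints =
  fixes M :: "'a set" and ys :: "'a list"
  assumes endpoints_marked: "ys \<noteq> [] \<Longrightarrow> hd ys \<in> M \<and> last ys \<in> M"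
begin

lemma last_marked: "Suc t = length ys \<Longrightarrow> ys ! t \<in> M"
  using endpoints_marked by (metis diff_Suc_1 last_conv_nth list.size(3) nat.distinct(1))

lemma block_atE:
  assumes "Suc t < length ys"
  obtains i j where "block_at M ys t = (i, j)" "(i, j) \<in> consecutive_marked M ys" "i \<le> t" "t < j"
proof -
  have "ys \<noteq> []"
    using assms by auto
  then have "hd ys \<in> M" "last ys \<in> M"
    using endpoints_marked by simp_all
  then show thesis
    using consecutive_marked_covers[OF _ _ assms] block_at_eq that by metis
qed

lemma inj_on_restrict_blocks: "inj_on (restrict_blocks M ys) (compatible_seqs M \<mu> \<kappa> ys)"
proof (rule inj_onI)
  fix w w' assume w: "w \<in> compatible_seqs M \<mu> \<kappa> ys" and w': "w' \<in> compatible_seqs M \<mu> \<kappa> ys"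
    and eq: "restrict_blocks M ys w = restrict_blocks M ys w'"
  have "w t = w' t" for t
  proof (cases "Suc t < length ys")
    case True
    then obtain i j where "(i, j) \<in> consecutive_marked M ys" "i \<le> t" "t < j"
      by (rule block_atE)
    then show ?thesis
      using fun_cong[OF fun_cong[OF eq, of "(i, j)"], of t] by (simp add: restrict_blocks_def)
  next
    case False
    then show ?thesis
      using w w' last_marked[of t] by (cases "Suc t = length ys") (auto simp: compatible_seqs_def)
  qed
  then show "w = w'" ..
qed

context
  fixes \<mu> :: "'a \<Rightarrow> int" and \<kappa> :: "'a \<Rightarrow> 'k::linorder" and F
  assumes F: "F \<in> (\<Pi>\<^sub>E b\<in>consecutive_marked M ys. block_chains \<mu> \<kappa> ys b)"
begin

lemma block_chain:
  "(i, j) \<in> consecutive_marked M ys \<Longrightarrow>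
    F (i, j) \<in> int_chains i j (\<mu> (ys ! i)) (\<mu> (ys ! j)) (\<lambda>t. \<kappa> (ys ! Suc t) < \<kappa> (ys ! t))"
  using F by (auto simp: block_chains_def)

lemma glue_blocks_eq:
  assumes ij: "(i, j) \<in> consecutive_marked M ys" "i \<le> t" "t \<le> j"
  shows "glue_blocks M \<mu> ys F t = F (i, j) t"
proof (cases "t < j")
  case True
  then show ?thesis
    using ij block_at_eq[OF ij(1)] by (auto simp: glue_blocks_def consecutive_marked_def)
next
  case False
  then have "t = j"
    using ij by simp
  show ?thesis
  proof (cases "Suc j < length ys")
    case True
    then obtain i' j' where b: "block_at M ys j = (i', j')" "(i', j') \<in> consecutive_marked M ys"
      "i' \<le> j" "j < j'"
      by (rule block_atE)
    have "\<not> i' < j"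
      using b(2,4) ij(1) by (auto simp: consecutive_marked_def)
    then have "i' = j"
      using b(3) by simp
    then show ?thesis
      using b True \<open>t = j\<close> block_chain[OF ij(1)] block_chain[OF b(2)]
      by (simp add: glue_blocks_def int_chains_def)
  next
    case False
    then show ?thesis
      using ij \<open>t = j\<close> block_chain[OF ij(1)]
      by (auto simp: glue_blocks_def int_chains_def consecutive_marked_def)
  qed
qed

lemma glue_blocks_in_compatible_seqs: "glue_blocks M \<mu> ys F \<in> compatible_seqs M \<mu> \<kappa> ys"
  unfolding compatible_seqs_def mem_Collect_eq
proof (intro conjI allI impI)
  fix t assume t: "t < length ys" "ys ! t \<in> M"
  show "glue_blocks M \<mu> ys F t = \<mu> (ys ! t)"
  proof (cases "Suc t < length ys")
    case True
    then obtain i j where b: "block_at M ys t = (i, j)" "(i, j) \<in> consecutive_marked M ys" "i \<le> t" "t < j"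
      by (rule block_atE)
    have "\<not> i < t"
      using b(2,4) t(2) by (auto simp: consecutive_marked_def)
    then show ?thesis
      using glue_blocks_eq[OF b(2)] b block_chain[OF b(2)] by (simp add: int_chains_def)
  qed (use t in \<open>simp add: glue_blocks_def\<close>)
next
  fix t assume "Suc t < length ys"
  then obtain i j where b: "block_at M ys t = (i, j)" "(i, j) \<in> consecutive_marked M ys" "i \<le> t" "t < j"
    by (rule block_atE)
  then show "glue_blocks M \<mu> ys F t \<le> glue_blocks M \<mu> ys F (Suc t)"
    "\<kappa> (ys ! Suc t) < \<kappa> (ys ! t) \<Longrightarrow> glue_blocks M \<mu> ys F t < glue_blocks M \<mu> ys F (Suc t)"
    using glue_blocks_eq[OF b(2), of t] glue_blocks_eq[OF b(2), of "Suc t"] block_chain[OF b(2)]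
    by (auto simp: int_chains_def)
qed (simp add: glue_blocks_def)

lemma restrict_blocks_glue_blocks: "restrict_blocks M ys (glue_blocks M \<mu> ys F) = F"
proof
  fix b
  show "restrict_blocks M ys (glue_blocks M \<mu> ys F) b = F b"
  proof (cases "b \<in> consecutive_marked M ys")
    case True
    then obtain i j where b: "b = (i, j)" "(i, j) \<in> consecutive_marked M ys"
      by (metis prod.collapse)
    have "(if t \<in> {i..j} then glue_blocks M \<mu> ys F t else 0) = F (i, j) t" for t
      using glue_blocks_eq[OF b(2), of t] block_chain[OF b(2)] by (auto simp: int_chains_def)
    then show ?thesis
      using b(2) unfolding b(1) restrict_blocks_def by auto
  next
    case False
    then show ?thesis
      using PiE_arb[OF F False] by (simp add: restrict_blocks_def)
  qed
qed

end

lemma bij_betw_restrict_blocks: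
  "bij_betw (restrict_blocks M ys) (compatible_seqs M \<mu> \<kappa> ys)
     (\<Pi>\<^sub>E b\<in>consecutive_marked M ys. block_chains \<mu> \<kappa> ys b)"
proof (rule bij_betw_imageI[OF inj_on_restrict_blocks], intro equalityI subsetI)
  fix F assume "F \<in> (\<Pi>\<^sub>E b\<in>consecutive_marked M ys. block_chains \<mu> \<kappa> ys b)"
  then show "F \<in> restrict_blocks M ys ` compatible_seqs M \<mu> \<kappa> ys"
    by (metis image_eqI glue_blocks_in_compatible_seqs restrict_blocks_glue_blocks)
qed (metis imageE restrict_blocks_in_block_chains)

lemma finite_PiE_block_chains: "finite (\<Pi>\<^sub>E b\<in>consecutive_marked M ys. block_chains \<mu> \<kappa> ys b)"
  using finite_consecutive_marked
  by (intro finite_PiE) (auto simp: block_chains_def consecutive_marked_def intro: finite_int_chains)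

lemma finite_compatible_seqs: "finite (compatible_seqs M \<mu> \<kappa> ys)"
  using bij_betw_finite[OF bij_betw_restrict_blocks] finite_PiE_block_chains by blast

lemma card_compatible_seqs:
  "card (compatible_seqs M \<mu> \<kappa> ys) = (\<Prod>b\<in>consecutive_marked M ys. card (block_chains \<mu> \<kappa> ys b))"
proof -
  have "card (compatible_seqs M \<mu> \<kappa> ys) = card (\<Pi>\<^sub>E b\<in>consecutive_marked M ys. block_chains \<mu> \<kappa> ys b)"
    by (rule bij_betw_same_card[OF bij_betw_restrict_blocks])
  also have "\<dots> = (\<Prod>b\<in>consecutive_marked M ys. card (block_chains \<mu> \<kappa> ys b))"
    by (rule card_PiE[OF finite_consecutive_marked])
  finally show ?thesis .
qed

end

section \<open>Integer points of a marked poset, sorted by a labelling\<close>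

definition marked_int_points ::
  "'a set \<Rightarrow> ('a \<Rightarrow> 'a \<Rightarrow> bool) \<Rightarrow> 'a set \<Rightarrow> ('a \<Rightarrow> int) \<Rightarrow> ('a \<Rightarrow> int) set" where
  "marked_int_points P le M \<mu> =
     {v. (\<forall>p. p \<notin> P \<longrightarrow> v p = 0) \<and> (\<forall>a\<in>M. v a = \<mu> a) \<and> (\<forall>p q. le p q \<longrightarrow> v p \<le> v q)}"

definition lex_linexts ::
  "'a set \<Rightarrow> ('a \<Rightarrow> 'a \<Rightarrow> bool) \<Rightarrow> 'a set \<Rightarrow> ('a \<Rightarrow> int) \<Rightarrow> ('a \<Rightarrow> 'k::linorder) \<Rightarrow> 'a list set" where
  "lex_linexts P le M \<mu> \<kappa> =
     {ys. linear_extension P le ys \<and>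
        (\<forall>i j. i < j \<and> j < length ys \<and> ys ! i \<in> M \<and> ys ! j \<in> M \<longrightarrow>
           (\<mu> (ys ! i), \<kappa> (ys ! i)) < (\<mu> (ys ! j), \<kappa> (ys ! j)))}"

definition point_of_seq :: "'a list \<Rightarrow> (nat \<Rightarrow> int) \<Rightarrow> 'a \<Rightarrow> int" where
  "point_of_seq ys w p = (if p \<in> set ys then w (inv_into {..<length ys} ((!) ys) p) else 0)"

definition seq_along :: "'a list \<Rightarrow> ('a \<Rightarrow> int) \<Rightarrow> nat \<Rightarrow> int" where
  "seq_along ys v t = (if t < length ys then v (ys ! t) else 0)"

lemma point_of_seq_nth: "distinct ys \<Longrightarrow> t < length ys \<Longrightarrow> point_of_seq ys w (ys ! t) = w t"
  by (simp add: point_of_seq_def inj_on_nth)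

lemma point_of_seq_along:
  assumes "distinct ys" "\<And>p. p \<notin> set ys \<Longrightarrow> v p = 0"
  shows "point_of_seq ys (seq_along ys v) = v"
proof
  fix p
  show "point_of_seq ys (seq_along ys v) p = v p"
  proof (cases "p \<in> set ys")
    case True
    then obtain t where "t < length ys" "p = ys ! t"
      by (metis in_set_conv_nth)
    then show ?thesis
      using assms(1) by (simp add: point_of_seq_nth seq_along_def)
  qed (use assms(2) in \<open>simp add: point_of_seq_def\<close>)
qed

lemma hd_linear_extension_min:
  assumes "linear_extension P le ys" "ys \<noteq> []"
  shows "hd ys \<in> poset_min P le"
  unfolding poset_min_def
proof (intro CollectI conjI ballI impI)
  show "hd ys \<in> P"
    using assms hd_in_set[OF assms(2)] by (simp add: linear_extension_def)
  fix q assume "q \<in> P" "le q (hd ys)"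
  then obtain j where "j < length ys" "q = ys ! j"
    using assms(1) by (metis in_set_conv_nth linear_extension_def)
  then show "q = hd ys"
    using assms \<open>le q (hd ys)\<close> by (auto simp: linear_extension_def hd_conv_nth)
qed

lemma last_linear_extension_max:
  assumes "linear_extension P le ys" "ys \<noteq> []"
  shows "last ys \<in> poset_max P le"
  unfolding poset_max_def
proof (intro CollectI conjI ballI impI)
  show "last ys \<in> P"
    using assms last_in_set[OF assms(2)] by (simp add: linear_extension_def)
  fix q assume "q \<in> P" "le (last ys) q"
  then obtain j where j: "j < length ys" "q = ys ! j"
    using assms(1) by (metis in_set_conv_nth linear_extension_def)
  then have "length ys - 1 \<le> j"
    using assms \<open>le (last ys) q\<close> by (simp add: linear_extension_def last_conv_nth)
  then have "j = length ys - 1"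
    using j(1) by linarith
  then show "q = last ys"
    using j(2) assms(2) by (simp add: last_conv_nth)
qed

locale labeled_marked_poset =
  fixes P :: "'a set" and le :: "'a \<Rightarrow> 'a \<Rightarrow> bool" and M :: "'a set" and \<kappa> :: "'a \<Rightarrow> 'k::linorder"
  assumes finite_poset: "finite_poset P le"
    and marked_subset: "M \<subseteq> P"
    and extremal_marked: "poset_min P le \<union> poset_max P le \<subseteq> M"
    and inj_label: "inj_on \<kappa> P"
    and mono_label: "le p q \<Longrightarrow> \<kappa> p \<le> \<kappa> q"
begin

lemma linear_extension_marked_endpoints:
  assumes "linear_extension P le ys"
  shows "marked_endpoints M ys"
proof
  assume "ys \<noteq> []"
  then have "hd ys \<in> poset_min P le" "last ys \<in> poset_max P le"
    using assms by (simp_all add: hd_linear_extension_min last_linear_extension_max)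
  then show "hd ys \<in> M \<and> last ys \<in> M"
    using extremal_marked by blast
qed

lemma sorted_keys_point_of_seq:
  assumes ys: "linear_extension P le ys" and w: "w \<in> compatible_seqs M \<mu> \<kappa> ys"
  shows "sorted_wrt (<) (map (\<lambda>p. (point_of_seq ys w p, \<kappa> p)) ys)"
proof -
  have distinct: "distinct ys" and set: "set ys = P"
    using ys by (auto simp: linear_extension_def)
  have "(w t, \<kappa> (ys ! t)) < (w (Suc t), \<kappa> (ys ! Suc t))" if "Suc t < length ys" for t
  proof -
    have "ys ! t \<noteq> ys ! Suc t"
      using distinct that by (simp add: nth_eq_iff_index_eq)
    then have "\<kappa> (ys ! t) \<noteq> \<kappa> (ys ! Suc t)"
      using inj_label set that by (metis Suc_lessD inj_on_contraD nth_mem)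
    then show ?thesis
      using w that by (auto simp: compatible_seqs_def less_prod_def)
  qed
  then show ?thesis
    using distinct by (simp add: sorted_wrt_iff_nth_Suc_transp point_of_seq_nth)
qed

lemma point_of_seq_in_marked_int_points:
  assumes ys: "linear_extension P le ys" and w: "w \<in> compatible_seqs M \<mu> \<kappa> ys"
  shows "point_of_seq ys w \<in> marked_int_points P le M \<mu>"
  unfolding marked_int_points_def mem_Collect_eq
proof (intro conjI allI ballI impI)
  have distinct: "distinct ys" and set: "set ys = P"
    and before: "\<And>i j. i < length ys \<Longrightarrow> j < length ys \<Longrightarrow> le (ys ! i) (ys ! j) \<Longrightarrow> i \<le> j"
    using ys by (auto simp: linear_extension_def)
  have index: "\<exists>t<length ys. p = ys ! t" if "p \<in> P" for p
    using that set by (metis in_set_conv_nth)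
  show "point_of_seq ys w p = 0" if "p \<notin> P" for p
    using that set by (simp add: point_of_seq_def)
  show "point_of_seq ys w a = \<mu> a" if a: "a \<in> M" for a
  proof -
    obtain t where "t < length ys" "a = ys ! t"
      using a index marked_subset by blast
    then show ?thesis
      using a w distinct by (simp add: point_of_seq_nth compatible_seqs_def)
  qed
  fix p q assume "le p q"
  then obtain i j where ij: "i < length ys" "j < length ys" "p = ys ! i" "q = ys ! j"
    using finite_poset index by (metis finite_poset_def)
  then have "i \<le> j"
    using before \<open>le p q\<close> by blast
  show "point_of_seq ys w p \<le> point_of_seq ys w q"
  proof (cases "i = j")
    case False
    then have "(point_of_seq ys w (ys ! i), \<kappa> (ys ! i)) < (point_of_seq ys w (ys ! j), \<kappa> (ys ! j))"
      using sorted_keys_point_of_seq[OF ys w] \<open>i \<le> j\<close> ij by (simp add: sorted_wrt_iff_nth_less)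
    then show ?thesis
      using ij by (auto simp: less_prod_def)
  qed (use ij in simp)
qed

lemma point_of_seq_determines_linext:
  assumes ys: "linear_extension P le ys" "w \<in> compatible_seqs M \<mu> \<kappa> ys"
    and ys': "linear_extension P le ys'" "w' \<in> compatible_seqs M \<mu> \<kappa> ys'"
    and eq: "point_of_seq ys w = point_of_seq ys' w'"
  shows "ys = ys'"
proof -
  define key where "key = (\<lambda>p. (point_of_seq ys w p, \<kappa> p))"
  have set: "set ys = P" "set ys' = P"
    using ys(1) ys'(1) by (simp_all add: linear_extension_def)
  have "map key ys' = map key ys"
  proof (rule strict_sorted_equal)
    show "sorted_wrt (<) (map key ys)" "sorted_wrt (<) (map key ys')"
      using sorted_keys_point_of_seq[OF ys] sorted_keys_point_of_seq[OF ys'] eq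
      by (simp_all add: key_def)
  qed (simp add: set)
  moreover have "inj_on key P"
    using inj_label by (auto simp: key_def inj_on_def)
  ultimately show ?thesis
    using set by (metis map_inj_on Un_absorb)
qed

lemma inj_on_point_of_seq:
  assumes "linear_extension P le ys"
  shows "inj_on (point_of_seq ys) (compatible_seqs M \<mu> \<kappa> ys)"
proof (rule inj_onI)
  fix w w' assume w: "w \<in> compatible_seqs M \<mu> \<kappa> ys" and w': "w' \<in> compatible_seqs M \<mu> \<kappa> ys"
    and eq: "point_of_seq ys w = point_of_seq ys w'"
  have "distinct ys"
    using assms by (simp add: linear_extension_def)
  then have "w t = w' t" for t
    using fun_cong[OF eq, of "ys ! t"] w w'
    by (cases "t < length ys") (auto simp: point_of_seq_nth compatible_seqs_def)
  then show "w = w'" ..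
qed

lemma key_sorted_listing:
  fixes v :: "'a \<Rightarrow> 'b::linorder"
  obtains ys where "sorted_wrt (<) (map (\<lambda>p. (v p, \<kappa> p)) ys)" "set ys = P" "distinct ys"
proof -
  have "inj_on (\<lambda>p. (v p, \<kappa> p)) P"
    using inj_label by (simp add: inj_on_def)
  then interpret folding_insort_key "(\<le>)" "(<)" P "\<lambda>p. (v p, \<kappa> p)"
    by unfold_locales
  have "finite P"
    using finite_poset by (simp add: finite_poset_def)
  then obtain ys where "sorted_wrt (<) (map (\<lambda>p. (v p, \<kappa> p)) ys)" "set ys = P"
    using finite_set_strict_sorted[OF subset_refl] by metis
  moreover have "distinct ys"
    using calculation(1) distinct_if_distinct_map strict_sorted_iff by blast
  ultimately show thesis
    using that by blast
qed

context
  fixes \<mu> v :: "'a \<Rightarrow> int" and ys :: "'a list"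
  assumes v: "v \<in> marked_int_points P le M \<mu>"
    and sorted: "sorted_wrt (<) (map (\<lambda>p. (v p, \<kappa> p)) ys)"
begin

lemma key_sorted_less: "i < j \<Longrightarrow> j < length ys \<Longrightarrow> (v (ys ! i), \<kappa> (ys ! i)) < (v (ys ! j), \<kappa> (ys ! j))"
  using sorted by (simp add: sorted_wrt_iff_nth_less)

lemma key_sorted_in_lex_linexts:
  assumes "set ys = P" "distinct ys"
  shows "ys \<in> lex_linexts P le M \<mu> \<kappa>"
proof -
  have key_mono: "(v p, \<kappa> p) \<le> (v q, \<kappa> q)" if "le p q" for p q
  proof -
    have "v p \<le> v q"
      using v that by (simp add: marked_int_points_def)
    then show ?thesis
      using mono_label[OF that] by (auto simp: less_eq_prod_def)
  qed
  have "linear_extension P le ys"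
    unfolding linear_extension_def
    using assms key_sorted_less key_mono by (metis leD not_le_imp_less)
  moreover have "(\<mu> (ys ! i), \<kappa> (ys ! i)) < (\<mu> (ys ! j), \<kappa> (ys ! j))"
    if "i < j" "j < length ys" "ys ! i \<in> M" "ys ! j \<in> M" for i j
    using key_sorted_less[OF that(1,2)] v that(3,4) by (simp add: marked_int_points_def)
  ultimately show ?thesis
    unfolding lex_linexts_def by blast
qed

lemma seq_along_in_compatible_seqs: "seq_along ys v \<in> compatible_seqs M \<mu> \<kappa> ys"
  unfolding compatible_seqs_def mem_Collect_eq
proof (intro conjI allI impI)
  fix t assume t: "Suc t < length ys"
  then have "(v (ys ! t), \<kappa> (ys ! t)) < (v (ys ! Suc t), \<kappa> (ys ! Suc t))"
    using key_sorted_less by simp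
  then show "seq_along ys v t \<le> seq_along ys v (Suc t)"
    "\<kappa> (ys ! Suc t) < \<kappa> (ys ! t) \<Longrightarrow> seq_along ys v t < seq_along ys v (Suc t)"
    using t by (auto simp: seq_along_def less_prod_def)
qed (use v in \<open>auto simp: seq_along_def marked_int_points_def\<close>)

end

lemma marked_int_points_eq_UN:
  "marked_int_points P le M \<mu> =
     (\<Union>ys\<in>lex_linexts P le M \<mu> \<kappa>. point_of_seq ys ` compatible_seqs M \<mu> \<kappa> ys)"
proof (intro equalityI subsetI)
  fix v assume v: "v \<in> marked_int_points P le M \<mu>"
  obtain ys where ys: "sorted_wrt (<) (map (\<lambda>p. (v p, \<kappa> p)) ys)" "set ys = P" "distinct ys"
    by (rule key_sorted_listing)
  have "point_of_seq ys (seq_along ys v) = v"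
    using v ys(2) by (intro point_of_seq_along[OF ys(3)]) (simp add: marked_int_points_def)
  then show "v \<in> (\<Union>ys\<in>lex_linexts P le M \<mu> \<kappa>. point_of_seq ys ` compatible_seqs M \<mu> \<kappa> ys)"
    using key_sorted_in_lex_linexts[OF v ys] seq_along_in_compatible_seqs[OF v ys(1)] by (metis UN_iff image_eqI)
next
  fix v assume "v \<in> (\<Union>ys\<in>lex_linexts P le M \<mu> \<kappa>. point_of_seq ys ` compatible_seqs M \<mu> \<kappa> ys)"
  then obtain ys w where "ys \<in> lex_linexts P le M \<mu> \<kappa>" "w \<in> compatible_seqs M \<mu> \<kappa> ys"
    "v = point_of_seq ys w"
    by blast
  then show "v \<in> marked_int_points P le M \<mu>"
    using point_of_seq_in_marked_int_points by (simp add: lex_linexts_def)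
qed

lemma finite_lex_linexts: "finite (lex_linexts P le M \<mu> \<kappa>)"
proof (rule finite_subset)
  show "lex_linexts P le M \<mu> \<kappa> \<subseteq> {ys. set ys \<subseteq> P \<and> length ys \<le> card P}"
    by (auto simp: lex_linexts_def linear_extension_def distinct_card[symmetric])
  show "finite {ys. set ys \<subseteq> P \<and> length ys \<le> card P}"
    using finite_poset finite_lists_length_le by (auto simp: finite_poset_def)
qed

lemma card_marked_int_points:
  "card (marked_int_points P le M \<mu>) =
     (\<Sum>ys\<in>lex_linexts P le M \<mu> \<kappa>. card (compatible_seqs M \<mu> \<kappa> ys))"
proof -
  let ?L = "lex_linexts P le M \<mu> \<kappa>"
  have linext: "linear_extension P le ys" if "ys \<in> ?L" for ys
    using that by (simp add: lex_linexts_def)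
  have "card (marked_int_points P le M \<mu>) =
      (\<Sum>ys\<in>?L. card (point_of_seq ys ` compatible_seqs M \<mu> \<kappa> ys))"
    unfolding marked_int_points_eq_UN
  proof (rule card_UN_disjoint[OF finite_lex_linexts])
    show "\<forall>ys\<in>?L. \<forall>ys'\<in>?L. ys \<noteq> ys' \<longrightarrow>
        point_of_seq ys ` compatible_seqs M \<mu> \<kappa> ys \<inter> point_of_seq ys' ` compatible_seqs M \<mu> \<kappa> ys' = {}"
      using point_of_seq_determines_linext linext by blast
  qed (use linear_extension_marked_endpoints linext marked_endpoints.finite_compatible_seqs in blast)
  also have "\<dots> = (\<Sum>ys\<in>?L. card (compatible_seqs M \<mu> \<kappa> ys))"
    using inj_on_point_of_seq linext by (intro sum.cong refl card_image) blast
  finally show ?thesis .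
qed

lemma real_card_marked_int_points:
  "real (card (marked_int_points P le M \<mu>)) =
    (\<Sum>ys\<in>lex_linexts P le M \<mu> \<kappa>. \<Prod>(i, j)\<in>consecutive_marked M ys.
       (real_of_int (\<mu> (ys ! j) - \<mu> (ys ! i)) - real (label_descents \<kappa> ys i j) + real (j - i - 1))
         gchoose (j - i - 1))"
proof -
  have "real (card (compatible_seqs M \<mu> \<kappa> ys)) = (\<Prod>(i, j)\<in>consecutive_marked M ys.
       (real_of_int (\<mu> (ys ! j) - \<mu> (ys ! i)) - real (label_descents \<kappa> ys i j) + real (j - i - 1))
         gchoose (j - i - 1))"
    if ys: "ys \<in> lex_linexts P le M \<mu> \<kappa>" for ys
  proof -
    interpret marked_endpoints M ys
      using ys linear_extension_marked_endpoints by (simp add: lex_linexts_def)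
    have "(\<mu> (ys ! i), \<kappa> (ys ! i)) < (\<mu> (ys ! j), \<kappa> (ys ! j))" "i < j"
      if "(i, j) \<in> consecutive_marked M ys" for i j
      using ys that by (auto simp: lex_linexts_def consecutive_marked_def)
    then show ?thesis
      unfolding card_compatible_seqs of_nat_prod
      by (intro prod.cong refl) (auto simp: real_card_block_chains)
  qed
  then show ?thesis
    by (simp add: card_marked_int_points)
qed

end

section \<open>Lattice points of the dilated marked order polytope\<close>

lemma finite_posetD:
  assumes "finite_poset P le"
  shows "finite P" "le p q \<Longrightarrow> p \<in> P \<and> q \<in> P" "p \<in> P \<Longrightarrow> le p p"
    "le p q \<Longrightarrow> le q p \<Longrightarrow> p = q" "le p q \<Longrightarrow> le q s \<Longrightarrow> le p s"
  using assms unfolding finite_poset_def by (elim conjE; blast)+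

lemma finite_poset_min_below:
  assumes "finite_poset P le" "p \<in> P"
  obtains a where "a \<in> poset_min P le" "le a p"
proof -
  note refl = finite_posetD(3)[OF assms(1)] and antisym = finite_posetD(4)[OF assms(1)]
    and trans = finite_posetD(5)[OF assms(1)] and carrier = finite_posetD(2)[OF assms(1)]
  obtain a where a: "le a p" and least: "\<And>q. le q p \<Longrightarrow> card {r. le r a} \<le> card {r. le r q}"
    using ex_has_least_nat[of "\<lambda>q. le q p" p "\<lambda>q. card {r. le r q}"] refl assms(2) by blast
  have "q = a" if "q \<in> P" "le q a" for q
  proof (rule ccontr)
    assume "q \<noteq> a"
    then have "{r. le r q} \<subset> {r. le r a}"
      using that trans antisym carrier refl by blast
    moreover have "{r. le r a} \<subseteq> P"
      using carrier by blast
    then have "finite {r. le r a}"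
      using finite_posetD(1)[OF assms(1)] by (rule finite_subset)
    ultimately have "card {r. le r q} < card {r. le r a}"
      by (rule psubset_card_mono[rotated])
    then show False
      using least[of q] trans[OF that(2) a] by simp
  qed
  then have "a \<in> poset_min P le"
    using carrier[OF a] by (simp add: poset_min_def)
  then show thesis
    using that a by blast
qed

lemma finite_poset_max_above:
  assumes "finite_poset P le" "p \<in> P"
  obtains b where "b \<in> poset_max P le" "le p b"
proof -
  have "finite_poset P (\<lambda>x y. le y x)"
    using assms(1) unfolding finite_poset_def by (elim conjE) (intro conjI; blast)
  then obtain b where "b \<in> poset_min P (\<lambda>x y. le y x)" "le p b"
    using finite_poset_min_below[OF _ assms(2)] by blast
  moreover have "poset_max P le = poset_min P (\<lambda>x y. le y x)"
    by (simp add: poset_max_def poset_min_def)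
  ultimately show thesis
    by (intro that) simp_all
qed

lemma marked_int_points_zero:
  assumes "finite_poset P le" "poset_min P le \<union> poset_max P le \<subseteq> M"
  shows "marked_int_points P le M (\<lambda>_. 0) = {\<lambda>_. 0}"
proof (intro equalityI subsetI)
  fix v assume v: "v \<in> marked_int_points P le M (\<lambda>_. 0)"
  have mono: "\<And>p q. le p q \<Longrightarrow> v p \<le> v q" and marked: "\<And>a. a \<in> M \<Longrightarrow> v a = 0"
    and zero: "\<And>p. p \<notin> P \<Longrightarrow> v p = 0"
    using v by (simp_all add: marked_int_points_def)
  have "v p = 0" for p
  proof (cases "p \<in> P")
    case True
    obtain a where a: "a \<in> poset_min P le" "le a p"
      using finite_poset_min_below[OF assms(1) True] by blast
    obtain b where b: "b \<in> poset_max P le" "le p b"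
      using finite_poset_max_above[OF assms(1) True] by blast
    have "a \<in> M" "b \<in> M"
      using a(1) b(1) assms(2) by auto
    then show ?thesis
      using a(2) b(2) mono[of a p] mono[of p b] marked[of a] marked[of b] by simp
  qed (rule zero)
  then show "v \<in> {\<lambda>_. 0}"
    by auto
qed (simp add: marked_int_points_def)

definition with_marking :: "'a set \<Rightarrow> ('a \<Rightarrow> real) \<Rightarrow> ('a \<Rightarrow> real) \<Rightarrow> 'a \<Rightarrow> real" where
  "with_marking M lam x p = (if p \<in> M then lam p else x p)"

definition unmarked_coords :: "'a set \<Rightarrow> ('a \<Rightarrow> int) \<Rightarrow> 'a \<Rightarrow> real" where
  "unmarked_coords M v p = (if p \<in> M then 0 else real_of_int (v p))"

lemma mem_marked_order_polytope:
  "x \<in> marked_order_polytope P le M lam \<longleftrightarrow>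
     (\<forall>p. p \<notin> P - M \<longrightarrow> x p = 0) \<and>
     (\<forall>p q. le p q \<longrightarrow> with_marking M lam x p \<le> with_marking M lam x q)"
  by (simp add: marked_order_polytope_def with_marking_def)

lemma mono_iff_scaled_mono:
  fixes v :: "'a \<Rightarrow> int" and y :: "'a \<Rightarrow> real"
  assumes "\<And>p. real_of_int (v p) = c * y p" "c > 0"
  shows "(\<forall>p q. le p q \<longrightarrow> v p \<le> v q) \<longleftrightarrow> (\<forall>p q. le p q \<longrightarrow> y p \<le> y q)"
proof -
  have "v p \<le> v q \<longleftrightarrow> y p \<le> y q" for p q
    using assms by (metis mult_le_cancel_left_pos of_int_le_iff)
  then show ?thesis
    by simp
qed

context
  fixes P :: "'a set" and le :: "'a \<Rightarrow> 'a \<Rightarrow> bool" and M :: "'a set"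
    and lam :: "'a \<Rightarrow> real" and li :: "'a \<Rightarrow> int" and m :: nat
  assumes marked_subset: "M \<subseteq> P"
    and li: "\<And>a. a \<in> M \<Longrightarrow> real_of_int (li a) = lam a"
    and "m > 0"
begin

lemma unmarked_coords_in_dilate:
  assumes v: "v \<in> marked_int_points P le M (\<lambda>p. int m * li p)"
  shows "unmarked_coords M v \<in> {z \<in> (\<lambda>x p. real m * x p) ` marked_order_polytope P le M lam. \<forall>p. z p \<in> \<int>}"
proof -
  define x where "x p = unmarked_coords M v p / real m" for p
  have vx: "real_of_int (v p) = real m * with_marking M lam x p" for p
    using v li \<open>m > 0\<close> by (simp add: x_def unmarked_coords_def with_marking_def marked_int_points_def)
  have "\<forall>p q. le p q \<longrightarrow> with_marking M lam x p \<le> with_marking M lam x q"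
    using mono_iff_scaled_mono[where v=v and c="real m" and y="with_marking M lam x" and le=le] vx v \<open>m > 0\<close>
    by (simp add: marked_int_points_def)
  then have "x \<in> marked_order_polytope P le M lam"
    using v by (auto simp: mem_marked_order_polytope marked_int_points_def x_def unmarked_coords_def)
  moreover have "unmarked_coords M v = (\<lambda>p. real m * x p)"
    using \<open>m > 0\<close> by (simp add: x_def)
  moreover have "\<forall>p. unmarked_coords M v p \<in> \<int>"
    by (simp add: unmarked_coords_def)
  ultimately show ?thesis
    by blast
qed

lemma dilate_lattice_point_unmarked_coords:
  assumes "z \<in> {z \<in> (\<lambda>x p. real m * x p) ` marked_order_polytope P le M lam. \<forall>p. z p \<in> \<int>}"
  obtains v where "v \<in> marked_int_points P le M (\<lambda>p. int m * li p)" "z = unmarked_coords M v"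
proof -
  obtain x where x: "x \<in> marked_order_polytope P le M lam" and z: "z = (\<lambda>p. real m * x p)"
    and int: "\<And>p. z p \<in> \<int>"
    using assms by blast
  define v where "v p = (if p \<in> M then int m * li p else \<lfloor>z p\<rfloor>)" for p
  have vx: "real_of_int (v p) = real m * with_marking M lam x p" for p
    using li int[of p] by (simp add: v_def z with_marking_def)
  have "\<forall>p q. le p q \<longrightarrow> v p \<le> v q"
    using mono_iff_scaled_mono[where v=v and c="real m" and y="with_marking M lam x" and le=le] vx x \<open>m > 0\<close>
    by (simp add: mem_marked_order_polytope)
  then have "v \<in> marked_int_points P le M (\<lambda>p. int m * li p)"
    using x marked_subset by (auto simp: marked_int_points_def mem_marked_order_polytope v_def z)
  moreover have "z = unmarked_coords M v"
    using x vx by (auto simp: unmarked_coords_def z mem_marked_order_polytope with_marking_def fun_eq_iff)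
  ultimately show thesis
    by (rule that)
qed

lemma ehrhart_count_eq_card_marked_int_points:
  "ehrhart_count (marked_order_polytope P le M lam) m = card (marked_int_points P le M (\<lambda>p. int m * li p))"
proof -
  let ?Z = "marked_int_points P le M (\<lambda>p. int m * li p)"
  have "{z \<in> (\<lambda>x p. real m * x p) ` marked_order_polytope P le M lam. \<forall>p. z p \<in> \<int>} =
      unmarked_coords M ` ?Z"
    using unmarked_coords_in_dilate dilate_lattice_point_unmarked_coords by blast
  moreover have "inj_on (unmarked_coords M) ?Z"
  proof (rule inj_onI)
    fix v v' assume v: "v \<in> ?Z" and v': "v' \<in> ?Z" and eq: "unmarked_coords M v = unmarked_coords M v'"
    have "v p = v' p" for p
    proof (cases "p \<in> M")
      case False
      then show ?thesis
        using fun_cong[OF eq, of p] by (simp add: unmarked_coords_def)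
    qed (use v v' in \<open>simp add: marked_int_points_def\<close>)
    then show "v = v'" ..
  qed
  ultimately show ?thesis
    unfolding ehrhart_count_def by (simp add: card_image)
qed

end

lemma ehrhart_count_0: "ehrhart_count Q 0 = (if Q = {} then 0 else 1)"
proof -
  have "{z \<in> (\<lambda>x p. real 0 * x p) ` Q. \<forall>p. z p \<in> \<int>} = (if Q = {} then {} else {\<lambda>_. 0})"
    by auto
  then show ?thesis
    by (simp add: ehrhart_count_def)
qed

section \<open>The counting formula as a polynomial in the dilation factor\<close>

lemma real_polynomial_function_eq_on_infinite:
  fixes f g :: "real \<Rightarrow> real"
  assumes "real_polynomial_function f" "real_polynomial_function g"
    and "infinite S" "\<And>x. x \<in> S \<Longrightarrow> f x = g x"
  shows "f = g"
proof -
  obtain a n where h: "(\<lambda>x. f x - g x) = (\<lambda>x. \<Sum>i\<le>n. a i * x ^ i)"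
    using assms(1,2) real_polynomial_function_diff real_polynomial_function_iff_sum by blast
  have "S \<subseteq> {x. (\<Sum>i\<le>n. a i * x ^ i) = 0}"
    using assms(4) fun_cong[OF h] by (metis (mono_tags, lifting) diff_self mem_Collect_eq subsetI)
  then have "infinite {x. (\<Sum>i\<le>n. a i * x ^ i) = 0}"
    using assms(3) finite_subset by blast
  then have "\<forall>i\<le>n. a i = 0"
    using polyfun_finite_roots by blast
  then have "f x - g x = 0" for x
    using fun_cong[OF h, of x] by simp
  then show ?thesis
    by auto
qed

lemma real_polynomial_function_gchoose_compose:
  fixes f :: "'a::real_normed_vector \<Rightarrow> real"
  assumes "real_polynomial_function f"
  shows "real_polynomial_function (\<lambda>x. f x gchoose k)"
proof -
  obtain p where p: "real_polynomial_function p" "\<And>x. x gchoose k = p x"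
    using real_polynomial_function_gchoose[of k] by blast
  have "real_polynomial_function (p \<circ> f)"
    using assms p(1) real_polynomial_function_eq by blast
  then show ?thesis
    by (simp add: o_def p(2))
qed

definition ehrhart_formula ::
  "'a set \<Rightarrow> ('a \<Rightarrow> 'a \<Rightarrow> bool) \<Rightarrow> 'a set \<Rightarrow> ('a \<Rightarrow> real) \<Rightarrow> ('a \<Rightarrow> nat) \<Rightarrow> ('a \<Rightarrow> 'k::linorder) \<Rightarrow>
    real \<Rightarrow> real" where
  "ehrhart_formula P le M lam \<omega> \<kappa> x =
     (\<Sum>ys\<in>marked_linexts P le M lam \<omega>. \<Prod>(i, j)\<in>consecutive_marked M ys.
        (x * (lam (ys ! j) - lam (ys ! i)) - real (label_descents \<kappa> ys i j) + real (j - i - 1))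
          gchoose (j - i - 1))"

lemma real_polynomial_function_ehrhart_formula:
  "real_polynomial_function (ehrhart_formula P le M lam \<omega> \<kappa>)"
proof -
  have "real_polynomial_function (\<lambda>x. x * c - d + k)" for c d k :: real
    by (intro real_polynomial_function.intros real_polynomial_function_diff bounded_linear_ident)
  then have block: "real_polynomial_function (\<lambda>x. (x * c - d + k) gchoose r)" for c d k :: real and r
    by (rule real_polynomial_function_gchoose_compose)
  have linext: "real_polynomial_function (\<lambda>x. \<Prod>(i, j)\<in>consecutive_marked M ys.
      (x * (lam (ys ! j) - lam (ys ! i)) - real (label_descents \<kappa> ys i j) + real (j - i - 1))
        gchoose (j - i - 1))" for ys
    using finite_consecutive_marked by (intro real_polynomial_function_prod) (auto intro: block)
  show ?thesis
    unfolding ehrhart_formula_def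
  proof (cases "finite (marked_linexts P le M lam \<omega>)")
    case True
    then show "real_polynomial_function (\<lambda>x. \<Sum>ys\<in>marked_linexts P le M lam \<omega>.
        \<Prod>(i, j)\<in>consecutive_marked M ys.
          (x * (lam (ys ! j) - lam (ys ! i)) - real (label_descents \<kappa> ys i j) + real (j - i - 1))
            gchoose (j - i - 1))"
      by (rule real_polynomial_function_sum) (rule linext)
  qed (simp add: real_polynomial_function.intros)
qed

lemma scaled_floor_le: "x \<le> y \<Longrightarrow> int m * \<lfloor>x\<rfloor> \<le> int m * \<lfloor>y\<rfloor>"
  by (simp add: floor_mono mult_left_mono)

lemma scaled_floor_less_imp_less: "int m * \<lfloor>x\<rfloor> < int m * \<lfloor>y\<rfloor> \<Longrightarrow> x < y"
  by (metis floor_less_cancel mult_le_cancel_left not_le of_nat_0_le_iff)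

locale integral_marked_poset =
  fixes P :: "'a set" and le :: "'a \<Rightarrow> 'a \<Rightarrow> bool" and M :: "'a set"
    and lam :: "'a \<Rightarrow> real" and \<omega> :: "'a \<Rightarrow> nat"
  assumes marked_poset: "marked_poset P le M lam"
    and integral_marking: "\<forall>a\<in>M. lam a \<in> \<int>"
    and natural_labeling: "natural_labeling P le \<omega>"
begin

lemma of_int_floor_marking: "a \<in> M \<Longrightarrow> real_of_int \<lfloor>lam a\<rfloor> = lam a"
  using integral_marking by (metis Ints_cases floor_of_int)

lemma labeled_marked_poset_natural: "labeled_marked_poset P le M \<omega>"
  using marked_poset natural_labeling
  by unfold_locales (auto simp: marked_poset_def natural_labeling_def bij_betw_def)

lemma ehrhart_count_eq_card:
  "0 < m \<Longrightarrow> ehrhart_count (marked_order_polytope P le M lam) m =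
     card (marked_int_points P le M (\<lambda>p. int m * \<lfloor>lam p\<rfloor>))"
  using marked_poset of_int_floor_marking
  by (intro ehrhart_count_eq_card_marked_int_points) (auto simp: marked_poset_def)

lemma card_scaled_marked_int_points:
  assumes "labeled_marked_poset P le M \<kappa>"
    and compatible: "\<And>a b. a \<in> M \<Longrightarrow> b \<in> M \<Longrightarrow>
      (int m * \<lfloor>lam a\<rfloor>, \<kappa> a) < (int m * \<lfloor>lam b\<rfloor>, \<kappa> b) \<longleftrightarrow>
        lam a < lam b \<or> lam a = lam b \<and> \<omega> a < \<omega> b"
  shows "real (card (marked_int_points P le M (\<lambda>p. int m * \<lfloor>lam p\<rfloor>))) =
    ehrhart_formula P le M lam \<omega> \<kappa> (real m)"
proof -
  interpret labeled_marked_poset P le M \<kappa>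
    by (fact assms(1))
  have "lex_linexts P le M (\<lambda>p. int m * \<lfloor>lam p\<rfloor>) \<kappa> = marked_linexts P le M lam \<omega>"
    unfolding lex_linexts_def marked_linexts_def using compatible by (auto cong: conj_cong)
  moreover have "real_of_int (int m * \<lfloor>lam (ys ! j)\<rfloor> - int m * \<lfloor>lam (ys ! i)\<rfloor>) =
      real m * (lam (ys ! j) - lam (ys ! i))"
    if "(i, j) \<in> consecutive_marked M ys" for ys i j
  proof -
    have "ys ! i \<in> M" "ys ! j \<in> M"
      using that by (simp_all add: consecutive_marked_def)
    then show ?thesis
      by (simp add: of_int_floor_marking algebra_simps)
  qed
  ultimately show ?thesis
    unfolding real_card_marked_int_points ehrhart_formula_def
    by (intro sum.cong prod.cong) auto
qed

lemma ehrhart_count_eq_formula: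
  assumes "0 < m"
  shows "real (ehrhart_count (marked_order_polytope P le M lam) m) =
    ehrhart_formula P le M lam \<omega> \<omega> (real m)"
proof -
  have less_iff: "int m * \<lfloor>lam a\<rfloor> < int m * \<lfloor>lam b\<rfloor> \<longleftrightarrow> lam a < lam b"
    if "a \<in> M" "b \<in> M" for a b
    using assms of_int_floor_marking[OF that(1)] of_int_floor_marking[OF that(2)]
    by (metis floor_less_iff mult_less_cancel_left_pos of_nat_0_less_iff)
  have "(int m * \<lfloor>lam a\<rfloor>, \<omega> a) < (int m * \<lfloor>lam b\<rfloor>, \<omega> b) \<longleftrightarrow>
      lam a < lam b \<or> lam a = lam b \<and> \<omega> a < \<omega> b"
    if "a \<in> M" "b \<in> M" for a b
    using less_iff[OF that] less_iff[OF that(2,1)] by (auto simp: less_prod_def)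
  then show ?thesis
    using ehrhart_count_eq_card[OF assms] card_scaled_marked_int_points[OF labeled_marked_poset_natural]
    by simp
qed

lemma infinite_positive_reals_of_nat: "infinite (real ` {0<..})"
  by (simp add: finite_image_iff infinite_Ioi)

lemma ehrhart_formula_at_0_empty:
  assumes "marked_order_polytope P le M lam = {}"
  shows "ehrhart_formula P le M lam \<omega> \<omega> 0 = 0"
proof -
  have "ehrhart_formula P le M lam \<omega> \<omega> = (\<lambda>_. 0)"
  proof (rule real_polynomial_function_eq_on_infinite[OF _ _ infinite_positive_reals_of_nat])
    fix x assume "x \<in> real ` {0<..}"
    then show "ehrhart_formula P le M lam \<omega> \<omega> x = 0"
      using ehrhart_count_eq_formula assms by (auto simp: ehrhart_count_def)
  qed (simp_all add: real_polynomial_function_ehrhart_formula real_polynomial_function.intros)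
  then show ?thesis
    by simp
qed

lemma ehrhart_formula_at_0_nonempty:
  assumes x0: "x0 \<in> marked_order_polytope P le M lam"
  shows "ehrhart_formula P le M lam \<omega> \<omega> 0 = 1"
proof -
  define \<kappa> where "\<kappa> p = (with_marking M lam x0 p, \<omega> p)" for p
  have "labeled_marked_poset P le M \<kappa>"
    using labeled_marked_poset_natural x0
    by (auto simp: labeled_marked_poset_def \<kappa>_def inj_on_def less_eq_prod_def mem_marked_order_polytope)
  moreover have "(int m * \<lfloor>lam a\<rfloor>, \<kappa> a) < (int m * \<lfloor>lam b\<rfloor>, \<kappa> b) \<longleftrightarrow>
      lam a < lam b \<or> lam a = lam b \<and> \<omega> a < \<omega> b"
    if "a \<in> M" "b \<in> M" for a b m
    using that scaled_floor_less_imp_less[of m "lam a" "lam b"]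
      scaled_floor_le[of "lam a" "lam b" m] scaled_floor_le[of "lam b" "lam a" m]
    by (auto simp: less_prod_def \<kappa>_def with_marking_def)
  ultimately have count: "real (card (marked_int_points P le M (\<lambda>p. int m * \<lfloor>lam p\<rfloor>))) =
      ehrhart_formula P le M lam \<omega> \<kappa> (real m)" for m
    by (rule card_scaled_marked_int_points)
  have "ehrhart_formula P le M lam \<omega> \<omega> = ehrhart_formula P le M lam \<omega> \<kappa>"
    using ehrhart_count_eq_formula ehrhart_count_eq_card count
    by (intro real_polynomial_function_eq_on_infinite[OF _ _ infinite_positive_reals_of_nat])
      (auto simp: real_polynomial_function_ehrhart_formula)
  then have "ehrhart_formula P le M lam \<omega> \<omega> 0 = real (card (marked_int_points P le M (\<lambda>_. 0)))"
    using count[of 0] by simp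
  also have "marked_int_points P le M (\<lambda>_. 0) = {\<lambda>_. 0}"
    using marked_poset by (intro marked_int_points_zero) (auto simp: marked_poset_def)
  finally show ?thesis
    by simp
qed

lemma ehrhart_formula_at_0:
  "ehrhart_formula P le M lam \<omega> \<omega> 0 = real (ehrhart_count (marked_order_polytope P le M lam) 0)"
  using ehrhart_formula_at_0_empty ehrhart_formula_at_0_nonempty by (auto simp: ehrhart_count_0)

end

theorem theorem6p4:
  fixes P :: "'a set" and le :: "'a \<Rightarrow> 'a \<Rightarrow> bool" and M :: "'a set"
    and lam :: "'a \<Rightarrow> real" and \<omega> :: "'a \<Rightarrow> nat" and n :: nat
  assumes "marked_poset P le M lam"
    and "strict_marking le M lam"
    and "irredundant le M lam"
    and "\<forall>a\<in>M. lam a \<in> \<int>"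
    and "natural_labeling P le \<omega>"
  shows "real (ehrhart_count (marked_order_polytope P le M lam) n) =
    (\<Sum>ys\<in>marked_linexts P le M lam \<omega>.
       \<Prod>(i, j)\<in>consecutive_marked M ys.
          (real n * (lam (ys ! j) - lam (ys ! i)) - real (descents_between \<omega> ys i j)
             + real (j - i - 1)) gchoose (j - i - 1))"
proof -
  interpret integral_marked_poset P le M lam \<omega>
    using assms(1,4,5) by unfold_locales
  have "descents_between \<omega> = label_descents \<omega>"
    by (simp add: fun_eq_iff descents_between_def label_descents_def)
  then have "(\<Sum>ys\<in>marked_linexts P le M lam \<omega>. \<Prod>(i, j)\<in>consecutive_marked M ys.
      (real n * (lam (ys ! j) - lam (ys ! i)) - real (descents_between \<omega> ys i j) + real (j - i - 1))
        gchoose (j - i - 1)) = ehrhart_formula P le M lam \<omega> \<omega> (real n)"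
    by (simp add: ehrhart_formula_def)
  moreover have "real (ehrhart_count (marked_order_polytope P le M lam) n) =
      ehrhart_formula P le M lam \<omega> \<omega> (real n)"
    using ehrhart_count_eq_formula ehrhart_formula_at_0 by (cases "n = 0") simp_all
  ultimately show ?thesis
    by simp
qed

end
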